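(* Let $n\ge1$, $d=2^n$, and let $|\psi\rangle$ be an $n$-qubit pure state. For a Clifford unitary $C$ and $\mathbf{s}\in\{0,1\}^n$ let $P(\mathbf{s}|C)=|\langle\mathbf{s}|C|\psi\rangle|^2$, and for $\mathbf{s}_1,\mathbf{s}_2,\mathbf{s}_3,\mathbf{s}_4\in\{0,1\}^n$ let $\mathcal{Q}(\mathbf{s}_1,\mathbf{s}_2,\mathbf{s}_3,\mathbf{s}_4)=\mathbb{E}_C\big[P(\mathbf{s}_1|C)P(\mathbf{s}_2|C)P(\mathbf{s}_3|C)P(\mathbf{s}_4|C)\big]$, where $\mathbb{E}_C$ is the average over the uniform distribution on the $n$-qubit Clifford group. Then $$M_2(|\psi\rangle)=-\log\sum_{\mathbf{s}_1,\dots,\mathbf{s}_4\in\{0,1\}^n}(-2)^{-\|\mathbf{s}_1\oplus\mathbf{s}_2\oplus\mathbf{s}_3\oplus\mathbf{s}_4\|}\,\mathcal{Q}(\mathbf{s}_1,\mathbf{s}_2,\mathbf{s}_3,\mathbf{s}_4)-\log d,$$ where $\oplus$ is bitwise addition mod 2 and $\|\mathbf{x}\|$ is the Hamming weight of $\mathbf{x}\in\{0,1\}^n$.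
   Context: Logarithms are base 2. $\mathcal{P}_n$ is the set of the $4^n$ $n$-qubit Pauli strings $\sigma_1\otimes\cdots\otimes\sigma_n$, $\sigma_i\in\{I,X,Y,Z\}$. The stabilizer 2-Rényi entropy is $M_2(|\psi\rangle)=-\log\sum_{P\in\mathcal{P}_n}\Xi_P(|\psi\rangle)^2-\log d$ with $\Xi_P(|\psi\rangle)=d^{-1}\langle\psi|P|\psi\rangle^2$. The Clifford group consists of the unitaries $C$ with $CPC^\dagger\in\{\pm1,\pm i\}\mathcal{P}_n$ for all $P\in\mathcal{P}_n$ (global phases do not affect $P(\mathbf{s}|C)$, so the uniform average is over the finite group modulo phases). $|\mathbf{s}\rangle$ denotes the computational basis state labeled by the bit string $\mathbf{s}$. *)

theory Defs
  imports Complex_Main "Jordan_Normal_Form.Matrix"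
begin

text \<open>Computational basis states |s> with s in {0,1}^n are encoded by
  natural numbers a < 2^n (bit k of a is the k-th bit of s).\<close>

datatype pauli = PI | PX | PY | PZ

fun pauli_entry :: "pauli \<Rightarrow> bool \<Rightarrow> bool \<Rightarrow> complex" where
  "pauli_entry PI a b = (if a = b then 1 else 0)"
| "pauli_entry PX a b = (if a \<noteq> b then 1 else 0)"
| "pauli_entry PY a b = (if a = b then 0 else if b then - \<i> else \<i>)"
| "pauli_entry PZ a b = (if a = b then (if a then -1 else 1) else 0)"

definition pauli_string :: "nat \<Rightarrow> pauli list \<Rightarrow> complex mat" where
  "pauli_string n p = mat (2^n) (2^n)
     (\<lambda>(a, b). \<Prod>k<n. pauli_entry (p ! k) (bit a k) (bit b k))"

definition pauli_group :: "nat \<Rightarrow> complex mat set" where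
  "pauli_group n = pauli_string n ` {p. length p = n}"

definition adj :: "complex mat \<Rightarrow> complex mat" where
  "adj C = mat (dim_col C) (dim_row C) (\<lambda>(i, j). cnj (C $$ (j, i)))"

definition unitary_mat :: "nat \<Rightarrow> complex mat \<Rightarrow> bool" where
  "unitary_mat d C \<longleftrightarrow> C \<in> carrier_mat d d \<and> C * adj C = 1\<^sub>m d \<and> adj C * C = 1\<^sub>m d"

definition clifford_group :: "nat \<Rightarrow> complex mat set" where
  "clifford_group n = {C. unitary_mat (2^n) C \<and>
     (\<forall>P \<in> pauli_group n. \<exists>\<omega> \<in> {1, -1, \<i>, -\<i>}. \<exists>Q \<in> pauli_group n.
         C * P * adj C = \<omega> \<cdot>\<^sub>m Q)}"

definition clifford_mod_phase :: "nat \<Rightarrow> complex mat set set" where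
  "clifford_mod_phase n =
     (\<lambda>C. {z \<cdot>\<^sub>m C | z. cmod z = 1}) ` clifford_group n"

text \<open>Uniform average over the (finite) Clifford group modulo phases of a
  phase-invariant function f (evaluated at any representative).\<close>
definition clifford_avg :: "nat \<Rightarrow> (complex mat \<Rightarrow> real) \<Rightarrow> real" where
  "clifford_avg n f = (\<Sum>K \<in> clifford_mod_phase n. f (SOME C. C \<in> K))
                       / real (card (clifford_mod_phase n))"

definition is_state :: "nat \<Rightarrow> complex vec \<Rightarrow> bool" where
  "is_state n \<psi> \<longleftrightarrow> \<psi> \<in> carrier_vec (2^n) \<and> (\<Sum>a<2^n. (cmod (\<psi> $ a))^2) = 1"

definition expval :: "complex vec \<Rightarrow> complex mat \<Rightarrow> complex" where
  "expval \<psi> P = (\<Sum>a<dim_vec \<psi>. \<Sum>b<dim_vec \<psi>. cnj (\<psi> $ a) * P $$ (a, b) * \<psi> $ b)"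

definition Xi :: "nat \<Rightarrow> complex vec \<Rightarrow> complex mat \<Rightarrow> real" where
  "Xi n \<psi> P = (cmod (expval \<psi> P))^2 / 2^n"

definition M2 :: "nat \<Rightarrow> complex vec \<Rightarrow> real" where
  "M2 n \<psi> = - log 2 (\<Sum>P \<in> pauli_group n. (Xi n \<psi> P)^2) - log 2 (2^n)"

definition outcome_prob :: "nat \<Rightarrow> complex vec \<Rightarrow> complex mat \<Rightarrow> nat \<Rightarrow> real" where
  "outcome_prob n \<psi> C s = (cmod (\<Sum>b<2^n. C $$ (s, b) * \<psi> $ b))^2"

definition hamming :: "nat \<Rightarrow> nat \<Rightarrow> nat" where
  "hamming n x = card {k. k < n \<and> bit x k}"

definition Qfun :: "nat \<Rightarrow> complex vec \<Rightarrow> nat \<Rightarrow> nat \<Rightarrow> nat \<Rightarrow> nat \<Rightarrow> real" where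
  "Qfun n \<psi> s1 s2 s3 s4 = clifford_avg n (\<lambda>C.
     outcome_prob n \<psi> C s1 * outcome_prob n \<psi> C s2 * outcome_prob n \<psi> C s3 * outcome_prob n \<psi> C s4)"

end

theory Submission
  imports Defs
begin

text \<open>
  Let \<open>Z\<^sub>p\<close> be the diagonal Pauli string with the same support as the Pauli string
  \<open>P\<^sub>p\<close>; its eigenvalue on \<open>|s\<rangle>\<close> is the Walsh character \<open>\<chi>\<^sub>p(s)\<close>, which is
  multiplicative under xor and satisfies \<open>\<Sum>\<^sub>p \<chi>\<^sub>p(x) = 4^n (-2)^(-|x|)\<close>. Hence, for every
  fixed \<open>C\<close>, the weighted fourfold sum of outcome probabilities equals
  \<open>4^(-n) \<Sum>\<^sub>p |\<langle>\<psi>|C\<^sup>\<dagger> Z\<^sub>p C|\<psi>\<rangle>|^4\<close>.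
  A local Clifford \<open>D\<^sub>p\<close> (a Hadamard or a \<open>Y\<close>-basis rotation on each qubit) satisfies
  \<open>D\<^sub>p\<^sup>\<dagger> Z\<^sub>p D\<^sub>p = P\<^sub>p\<close>, so translating the Clifford average by \<open>D\<^sub>p\<close> turns \<open>Z\<^sub>p\<close> into \<open>P\<^sub>p\<close>.
  Conjugation by a Clifford permutes the Pauli strings up to phases, so
  \<open>\<Sum>\<^sub>p |\<langle>\<psi>|C\<^sup>\<dagger> P\<^sub>p C|\<psi>\<rangle>|^4\<close> does not depend on \<open>C\<close>; it equals \<open>4^n \<Sum>\<^sub>P \<Xi>\<^sub>P^2\<close>.
  The average is a genuine average because the Clifford group modulo phases is finite:
  only scalars commute with every Pauli string, so a Clifford is determined up to phase by
  its action on the finitely many Pauli strings.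
\<close>

lemma not_bit_ge_if_less_pow2: "(c::nat) < 2^n \<Longrightarrow> n \<le> k \<Longrightarrow> \<not> bit c k"
  by (metis bit_take_bit_iff not_le take_bit_nat_eq_self_iff)

lemma nat_eq_iff_low_bits_eq:
  "(a::nat) < 2^n \<Longrightarrow> b < 2^n \<Longrightarrow> (\<forall>k<n. bit a k = bit b k) \<longleftrightarrow> a = b"
  by (metis bit_eq_iff not_bit_ge_if_less_pow2 not_le)

lemma bit_add_pow2_if_less_pow2:
  assumes "(c::nat) < 2^n"
  shows "bit (c + 2^n) k \<longleftrightarrow> k = n \<or> bit c k"
proof -
  have "bit (c + 2^n) k \<longleftrightarrow> bit c k \<or> bit ((2::nat)^n) k"
    by (rule bit_disjunctive_add_iff) (use assms not_bit_ge_if_less_pow2 in \<open>auto simp: bit_exp_iff\<close>)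
  then show ?thesis by (auto simp: bit_exp_iff)
qed

lemma lessThan_pow2_Suc:
  "{..<2^Suc n} = {..<(2::nat)^n} \<union> (\<lambda>c. c + 2^n) ` {..<2^n}"
proof (intro subset_antisym subsetI)
  fix x :: nat assume "x \<in> {..<2^Suc n}"
  then show "x \<in> {..<2^n} \<union> (\<lambda>c. c + 2^n) ` {..<2^n}"
    by (cases "x < 2^n") (auto intro!: image_eqI[of _ _ "x - 2^n"])
qed auto

lemma sum_pow2_prod_bits:
  fixes f :: "nat \<Rightarrow> bool \<Rightarrow> 'a::comm_semiring_1"
  shows "(\<Sum>c::nat<2^n. \<Prod>k<n. f k (bit c k)) = (\<Prod>k<n. f k False + f k True)"
proof (induction n)
  case (Suc n)
  define g where "g c = (\<Prod>k<n. f k (bit c k))" for c :: nat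
  have low: "(\<Prod>k<Suc n. f k (bit c k)) = g c * f n False" if "c < 2^n" for c :: nat
    using that by (simp add: g_def not_bit_ge_if_less_pow2)
  have "(\<Prod>k<n. f k (bit (c + 2^n) k)) = g c" if "c < 2^n" for c :: nat
    unfolding g_def using that by (intro prod.cong) (auto simp: bit_add_pow2_if_less_pow2)
  then have high: "(\<Prod>k<Suc n. f k (bit (c + 2^n) k)) = g c * f n True" if "c < 2^n" for c :: nat
    using that by (simp add: bit_add_pow2_if_less_pow2)
  have "(\<Sum>c::nat<2^Suc n. \<Prod>k<Suc n. f k (bit c k))
      = (\<Sum>c::nat<2^n. \<Prod>k<Suc n. f k (bit c k)) + (\<Sum>c::nat<2^n. \<Prod>k<Suc n. f k (bit (c + 2^n) k))"
    by (simp only: lessThan_pow2_Suc, subst sum.union_disjoint) (auto simp: sum.reindex)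
  also have "\<dots> = (\<Sum>c<2^n. g c) * f n False + (\<Sum>c<2^n. g c) * f n True"
    unfolding sum_distrib_right by (intro arg_cong2[where f="(+)"] sum.cong refl) (simp_all add: low high del: prod.lessThan_Suc)
  finally show ?case by (simp add: Suc g_def distrib_left)
qed simp

lemma prod_if_const_else_zero:
  fixes c :: "'a::comm_semiring_1"
  shows "finite A \<Longrightarrow> (\<Prod>k\<in>A. if P k then c else 0) = (if \<forall>k\<in>A. P k then c ^ card A else 0)"
  by (induction A rule: finite_induct) auto

lemma sum_power4:
  fixes g :: "'a \<Rightarrow> 'b::comm_semiring_1"
  shows "(\<Sum>s\<in>A. g s)^4 = (\<Sum>a\<in>A. \<Sum>b\<in>A. \<Sum>c\<in>A. \<Sum>d\<in>A. g a * g b * g c * g d)"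
proof -
  have "(\<Sum>s\<in>A. g s)^4 = (\<Sum>a\<in>A. g a) * ((\<Sum>b\<in>A. g b) * ((\<Sum>c\<in>A. g c) * (\<Sum>d\<in>A. g d)))"
    by (simp add: power4_eq_xxxx mult.assoc)
  then show ?thesis
    by (simp only: sum_distrib_right, simp only: sum_distrib_left, simp add: mult.assoc)
qed

lemma sum_lists_length_prod:
  fixes f :: "nat \<Rightarrow> 'a::finite \<Rightarrow> 'b::comm_semiring_1"
  shows "(\<Sum>p\<in>{p. length p = n}. \<Prod>k<n. f k (p!k)) = (\<Prod>k<n. \<Sum>s\<in>UNIV. f k s)"
proof (induction n)
  case (Suc n)
  have lists_Suc: "{p::'a list. length p = Suc n} = (\<lambda>(xs, x). xs @ [x]) ` ({p. length p = n} \<times> UNIV)"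
    by (auto simp: image_iff length_Suc_conv_rev)
  have "inj_on (\<lambda>(xs, x). xs @ [x]) ({p::'a list. length p = n} \<times> UNIV)"
    by (auto simp: inj_on_def)
  then have "(\<Sum>p\<in>{p. length p = Suc n}. \<Prod>k<Suc n. f k (p!k))
      = (\<Sum>xs\<in>{p. length p = n}. \<Sum>x\<in>UNIV. (\<Prod>k<n. f k (xs!k)) * f n x)"
    unfolding lists_Suc sum.cartesian_product
    by (subst sum.reindex) (auto simp: nth_append intro!: sum.cong prod.cong)
  also have "\<dots> = (\<Sum>xs\<in>{p. length p = n}. \<Prod>k<n. f k (xs!k)) * (\<Sum>x\<in>UNIV. f n x)"
    by (simp add: sum_product)
  finally show ?case by (simp add: Suc)
qed simp

lemma UNIV_pauli: "(UNIV :: pauli set) = {PI, PX, PY, PZ}"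
  by (auto intro: pauli.exhaust)

instance pauli :: finite
  by standard (simp add: UNIV_pauli)

lemma ex_pauli: "(\<exists>t. P t) \<longleftrightarrow> P PI \<or> P PX \<or> P PY \<or> P PZ"
  by (metis pauli.exhaust)

lemma all_pauli: "(\<forall>t. P t) \<longleftrightarrow> P PI \<and> P PX \<and> P PY \<and> P PZ"
  by (metis pauli.exhaust)

lemma finite_pauli_lists: "finite {p :: pauli list. length p = n}"
  using finite_lists_length_eq[of "UNIV :: pauli set" n] by simp

lemma card_pauli_lists: "card {p :: pauli list. length p = n} = 4^n"
proof -
  have "card (UNIV :: pauli set) = 4" by (simp add: UNIV_pauli)
  then show ?thesis using card_lists_length_eq[of "UNIV :: pauli set" n] by simp
qed

lemma index_mult_mat_sum:
  "A \<in> carrier_mat nr n \<Longrightarrow> B \<in> carrier_mat n nc \<Longrightarrow> i < nr \<Longrightarrow> j < nc \<Longrightarrow>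
    (A * B) $$ (i, j) = (\<Sum>k<n. A $$ (i, k) * B $$ (k, j))"
  by (simp add: scalar_prod_def atLeast0LessThan)

lemma index_mult_mat_vec_sum:
  "A \<in> carrier_mat nr n \<Longrightarrow> v \<in> carrier_vec n \<Longrightarrow> i < nr \<Longrightarrow>
    (A *\<^sub>v v) $ i = (\<Sum>k<n. A $$ (i, k) * v $ k)"
  by (simp add: scalar_prod_def atLeast0LessThan)

lemma smult_smult_mat: "a \<cdot>\<^sub>m (b \<cdot>\<^sub>m A) = (a * b) \<cdot>\<^sub>m (A :: 'a::semigroup_mult mat)"
  by (rule eq_matI) (auto simp: mult.assoc)

lemma one_smult_mat [simp]: "(1 :: 'a::monoid_mult) \<cdot>\<^sub>m A = A"
  by (rule eq_matI) auto

lemma smult_mult_mat_vec: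
  "A \<in> carrier_mat nr n \<Longrightarrow> v \<in> carrier_vec n \<Longrightarrow> (k \<cdot>\<^sub>m A) *\<^sub>v v = k \<cdot>\<^sub>v (A *\<^sub>v (v :: 'a::comm_ring vec))"
  by (rule eq_vecI) (auto simp: index_mult_mat_vec_sum sum_distrib_left mult.assoc)

text \<open>Unlike \<open>mult_carrier_mat\<close>, this form lets the simplifier close carrier goals of products.\<close>

lemma mult_carrier_mat_square [simp]:
  "A \<in> carrier_mat N N \<Longrightarrow> B \<in> carrier_mat N N \<Longrightarrow> A * B \<in> carrier_mat N N"
  by (rule mult_carrier_mat)

definition trace_mat :: "'a::comm_monoid_add mat \<Rightarrow> 'a" where
  "trace_mat M = (\<Sum>a<dim_row M. M $$ (a, a))"

lemma cnj_mult_self_eq_one: "cmod z = 1 \<Longrightarrow> cnj z * z = 1"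
  by (metis complex_norm_square mult.commute of_real_1 power_one)

lemma dim_adj [simp]: "dim_row (adj A) = dim_col A" "dim_col (adj A) = dim_row A"
  by (simp_all add: adj_def)

lemma adj_carrier [simp]: "A \<in> carrier_mat nr nc \<Longrightarrow> adj A \<in> carrier_mat nc nr"
  unfolding carrier_mat_def by simp

lemma index_adj [simp]: "i < dim_col A \<Longrightarrow> j < dim_row A \<Longrightarrow> adj A $$ (i, j) = cnj (A $$ (j, i))"
  by (simp add: adj_def)

lemma adj_one_mat [simp]: "adj (1\<^sub>m N) = 1\<^sub>m N"
  by (rule eq_matI) auto

lemma adj_smult_mat: "adj (z \<cdot>\<^sub>m A) = cnj z \<cdot>\<^sub>m adj A"
  by (rule eq_matI) auto

lemma adj_mult_mat:
  assumes "A \<in> carrier_mat nr n" "B \<in> carrier_mat n nc"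
  shows "adj (A * B) = adj B * adj A"
proof (rule eq_matI)
  fix i j assume "i < dim_row (adj B * adj A)" "j < dim_col (adj B * adj A)"
  then have "i < nc" "j < nr" using assms by auto
  then show "adj (A * B) $$ (i, j) = (adj B * adj A) $$ (i, j)"
    using assms by (simp add: index_mult_mat_sum[OF assms] index_mult_mat_sum[of "adj B" nc n "adj A" nr]
      mult.commute del: index_mult_mat(1))
qed (use assms in auto)

lemma index_mult_mat_adj_sandwich:
  assumes A: "A \<in> carrier_mat N N" and M: "M \<in> carrier_mat N N" and "a < N" "b < N"
  shows "(A * M * adj A) $$ (a, b) = (\<Sum>c<N. \<Sum>e<N. A $$ (a, c) * M $$ (c, e) * cnj (A $$ (b, e)))"
proof -
  have "(A * M * adj A) $$ (a, b) = (\<Sum>e<N. \<Sum>c<N. A $$ (a, c) * M $$ (c, e) * cnj (A $$ (b, e)))"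
    using assms by (simp add: index_mult_mat_sum[of _ N N _ N] sum_distrib_right del: index_mult_mat(1))
  also have "\<dots> = (\<Sum>c<N. \<Sum>e<N. A $$ (a, c) * M $$ (c, e) * cnj (A $$ (b, e)))"
    by (rule sum.swap)
  finally show ?thesis .
qed

lemma mult_sandwich_cancel:
  assumes "C \<in> carrier_mat N N" "adj C * C = 1\<^sub>m N" "X \<in> carrier_mat N N"
  shows "adj C * (C * X * adj C) * C = X"
proof -
  have "adj C * (C * X * adj C) * C = (adj C * C) * X * (adj C * C)"
    using assms(1,3) by (simp add: assoc_mult_mat[of _ N N _ N _ N])
  also have "\<dots> = X"
    using assms by simp
  finally show ?thesis .
qed

lemma unitary_mat_mult:
  assumes A: "unitary_mat N A" and B: "unitary_mat N B"
  shows "unitary_mat N (A * B)"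
proof -
  have carr: "A \<in> carrier_mat N N" "B \<in> carrier_mat N N"
    using A B by (auto simp: unitary_mat_def)
  have "A * B * adj (A * B) = A * (B * adj B) * adj A"
    using carr by (simp add: adj_mult_mat[of _ N N] assoc_mult_mat[of _ N N _ N _ N])
  also have "\<dots> = 1\<^sub>m N"
    using A B carr by (simp add: unitary_mat_def)
  finally have "A * B * adj (A * B) = 1\<^sub>m N" .
  moreover have "adj (A * B) * (A * B) = adj B * (adj A * A) * B"
    using carr by (simp add: adj_mult_mat[of _ N N] assoc_mult_mat[of _ N N _ N _ N])
  moreover have "adj B * (adj A * A) * B = 1\<^sub>m N"
    using A B carr by (simp add: unitary_mat_def)
  ultimately show ?thesis
    using carr by (simp add: unitary_mat_def)
qed

lemma unitary_mat_smult:
  assumes A: "unitary_mat N A" and z: "cmod z = 1"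
  shows "unitary_mat N (z \<cdot>\<^sub>m A)"
proof -
  have "cnj z * z = 1"
    using z by (rule cnj_mult_self_eq_one)
  then show ?thesis
    using A by (auto simp: unitary_mat_def adj_smult_mat mult_smult_distrib[of _ N N _ N]
      mult_smult_assoc_mat[of _ N N _ N] smult_smult_mat mult.commute)
qed

lemma norm_eq_one_if_unitary_smult:
  assumes cA: "unitary_mat N (c \<cdot>\<^sub>m A)" and A: "unitary_mat N A" and N: "0 < N"
  shows "cmod c = 1"
proof -
  have carr: "A \<in> carrier_mat N N" and unitA: "A * adj A = 1\<^sub>m N"
    using A by (auto simp: unitary_mat_def)
  have "1\<^sub>m N = (c \<cdot>\<^sub>m A) * adj (c \<cdot>\<^sub>m A)"
    using cA by (simp add: unitary_mat_def)
  also have "\<dots> = (c * cnj c) \<cdot>\<^sub>m 1\<^sub>m N"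
    using carr unitA by (simp add: adj_smult_mat mult_smult_distrib[of _ N N _ N]
      mult_smult_assoc_mat[of _ N N _ N] smult_smult_mat mult.commute)
  finally have "(1\<^sub>m N :: complex mat) $$ (0, 0) = ((c * cnj c) \<cdot>\<^sub>m 1\<^sub>m N) $$ (0, 0)"
    by simp
  then have "c * cnj c = 1"
    using N by simp
  then have "complex_of_real ((cmod c)^2) = 1"
    by (simp only: complex_norm_square)
  then show ?thesis
    by (simp only: of_real_eq_1_iff power2_eq_1_iff) (use norm_ge_zero[of c] in linarith)
qed

lemma sprod_conjugate_mult_mat_vec:
  assumes A: "A \<in> carrier_mat nr nc" and v: "v \<in> carrier_vec nc" and w: "w \<in> carrier_vec nr"
  shows "conjugate (A *\<^sub>v v) \<bullet> w = conjugate v \<bullet> (adj A *\<^sub>v w)"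
proof -
  have "conjugate (A *\<^sub>v v) \<bullet> w = (\<Sum>i<nr. \<Sum>j<nc. cnj (A $$ (i, j)) * cnj (v $ j) * w $ i)"
    using A v w by (simp add: scalar_prod_def atLeast0LessThan index_mult_mat_vec_sum sum_distrib_right)
  also have "\<dots> = (\<Sum>j<nc. \<Sum>i<nr. cnj (v $ j) * (cnj (A $$ (i, j)) * w $ i))"
    by (subst sum.swap) (simp add: mult_ac)
  also have "\<dots> = conjugate v \<bullet> (adj A *\<^sub>v w)"
    using A v w by (simp add: scalar_prod_def atLeast0LessThan index_mult_mat_vec_sum sum_distrib_left)
  finally show ?thesis .
qed

lemma expval_eq_sprod:
  "v \<in> carrier_vec N \<Longrightarrow> M \<in> carrier_mat N N \<Longrightarrow> expval v M = conjugate v \<bullet> (M *\<^sub>v v)"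
  by (simp add: expval_def scalar_prod_def atLeast0LessThan index_mult_mat_vec_sum sum_distrib_left mult.assoc)

lemma expval_mult_mat_vec:
  assumes A: "A \<in> carrier_mat N N" and M: "M \<in> carrier_mat N N" and v: "v \<in> carrier_vec N"
  shows "expval (A *\<^sub>v v) M = expval v (adj A * M * A)"
proof -
  have "expval (A *\<^sub>v v) M = conjugate (A *\<^sub>v v) \<bullet> (M *\<^sub>v (A *\<^sub>v v))"
    using A M v by (simp add: expval_eq_sprod[of _ N])
  also have "\<dots> = conjugate v \<bullet> (adj A *\<^sub>v (M *\<^sub>v (A *\<^sub>v v)))"
    using A M v by (simp add: sprod_conjugate_mult_mat_vec[of _ N N])
  also have "adj A *\<^sub>v (M *\<^sub>v (A *\<^sub>v v)) = (adj A * M * A) *\<^sub>v v"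
    using A M v by (simp add: assoc_mult_mat_vec[of "adj A * M" N N A N v] assoc_mult_mat_vec[of "adj A" N N M N])
  also have "conjugate v \<bullet> \<dots> = expval v (adj A * M * A)"
    using A M v by (simp add: expval_eq_sprod[of _ N])
  finally show ?thesis .
qed

lemma expval_smult_vec: "expval (z \<cdot>\<^sub>v v) M = (cnj z * z) * expval v M"
  by (simp add: expval_def sum_distrib_left mult_ac)

lemma expval_smult_mat:
  "M \<in> carrier_mat (dim_vec v) (dim_vec v) \<Longrightarrow> expval v (z \<cdot>\<^sub>m M) = z * expval v M"
  by (auto simp: expval_def sum_distrib_left mult_ac intro!: sum.cong)

lemma expval_phase_mult_mat_vec:
  assumes "C \<in> carrier_mat nr nc" "\<psi> \<in> carrier_vec nc" "cmod w = 1"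
  shows "expval ((w \<cdot>\<^sub>m C) *\<^sub>v \<psi>) M = expval (C *\<^sub>v \<psi>) M"
proof -
  have "cnj w * w = 1"
    using assms(3) by (rule cnj_mult_self_eq_one)
  then show ?thesis
    using assms by (simp add: smult_mult_mat_vec expval_smult_vec)
qed

lemma expval_diagonal:
  assumes v: "v \<in> carrier_vec N" and diag: "\<And>a b. a < N \<Longrightarrow> b < N \<Longrightarrow> a \<noteq> b \<Longrightarrow> M $$ (a, b) = 0"
  shows "expval v M = (\<Sum>a<N. M $$ (a, a) * (cmod (v $ a))^2)"
proof -
  have "(\<Sum>b<N. cnj (v $ a) * M $$ (a, b) * v $ b) = M $$ (a, a) * (cmod (v $ a))^2" if "a < N" for a
  proof -
    have "(\<Sum>b<N. cnj (v $ a) * M $$ (a, b) * v $ b) = cnj (v $ a) * M $$ (a, a) * v $ a"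
      using that diag by (subst sum.remove[of _ a]) auto
    also have "\<dots> = M $$ (a, a) * (v $ a * cnj (v $ a))"
      by (simp only: mult_ac)
    finally show ?thesis by (simp only: complex_norm_square)
  qed
  then show ?thesis using v by (simp add: expval_def)
qed

section \<open>Tensor products of single-qubit operators\<close>

text \<open>A single-qubit operator is a \<open>2 \<times> 2\<close> matrix indexed by bits; \<open>tensor_mat n G\<close> is
  \<open>G 0 \<otimes> \<dots> \<otimes> G (n - 1)\<close>, with qubit \<open>k\<close> acting on bit \<open>k\<close> of the basis index.\<close>

type_synonym qubit_op = "bool \<Rightarrow> bool \<Rightarrow> complex"

definition qop_mult :: "qubit_op \<Rightarrow> qubit_op \<Rightarrow> qubit_op" where
  "qop_mult G H = (\<lambda>a b. G a False * H False b + G a True * H True b)"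

definition qop_adj :: "qubit_op \<Rightarrow> qubit_op" where
  "qop_adj G = (\<lambda>a b. cnj (G b a))"

definition qop_id :: qubit_op where
  "qop_id = (\<lambda>a b. if a = b then 1 else 0)"

definition tensor_mat :: "nat \<Rightarrow> (nat \<Rightarrow> qubit_op) \<Rightarrow> complex mat" where
  "tensor_mat n G = mat (2^n) (2^n) (\<lambda>(a, b). \<Prod>k<n. G k (bit a k) (bit b k))"

lemma tensor_mat_carrier [simp]: "tensor_mat n G \<in> carrier_mat (2^n) (2^n)"
  by (simp add: tensor_mat_def)

lemma dim_tensor_mat [simp]: "dim_row (tensor_mat n G) = 2^n" "dim_col (tensor_mat n G) = 2^n"
  by (simp_all add: tensor_mat_def)

lemma index_tensor_mat:
  "a < 2^n \<Longrightarrow> b < 2^n \<Longrightarrow> tensor_mat n G $$ (a, b) = (\<Prod>k<n. G k (bit a k) (bit b k))"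
  by (simp add: tensor_mat_def)

lemma tensor_mat_cong: "(\<And>k. k < n \<Longrightarrow> G k = H k) \<Longrightarrow> tensor_mat n G = tensor_mat n H"
  unfolding tensor_mat_def by (intro cong_mat refl) (auto intro!: prod.cong)

lemma tensor_mat_mult: "tensor_mat n G * tensor_mat n H = tensor_mat n (\<lambda>k. qop_mult (G k) (H k))"
proof (rule eq_matI)
  fix a b assume "a < dim_row (tensor_mat n (\<lambda>k. qop_mult (G k) (H k)))"
    "b < dim_col (tensor_mat n (\<lambda>k. qop_mult (G k) (H k)))"
  then have a: "a < 2^n" and b: "b < 2^n" by auto
  have "(tensor_mat n G * tensor_mat n H) $$ (a, b)
      = (\<Sum>c::nat<2^n. \<Prod>k<n. G k (bit a k) (bit c k) * H k (bit c k) (bit b k))"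
    using a b by (simp add: index_mult_mat_sum[of _ "2^n" "2^n" _ "2^n"] index_tensor_mat prod.distrib
      del: index_mult_mat(1))
  also have "\<dots> = tensor_mat n (\<lambda>k. qop_mult (G k) (H k)) $$ (a, b)"
    using a b by (simp add: sum_pow2_prod_bits[of "\<lambda>k c. G k (bit a k) c * H k c (bit b k)"]
      index_tensor_mat qop_mult_def)
  finally show "(tensor_mat n G * tensor_mat n H) $$ (a, b) = tensor_mat n (\<lambda>k. qop_mult (G k) (H k)) $$ (a, b)" .
qed auto

lemma adj_tensor_mat: "adj (tensor_mat n G) = tensor_mat n (\<lambda>k. qop_adj (G k))"
  by (rule eq_matI) (auto simp: index_tensor_mat qop_adj_def)

lemma tensor_mat_scaled:
  "tensor_mat n (\<lambda>k a b. c k * G k a b) = (\<Prod>k<n. c k) \<cdot>\<^sub>m tensor_mat n G"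
  by (rule eq_matI) (auto simp: index_tensor_mat prod.distrib)

lemma tensor_mat_id: "tensor_mat n (\<lambda>k. qop_id) = 1\<^sub>m (2^n)"
proof (rule eq_matI)
  fix a b assume "a < dim_row (1\<^sub>m (2^n) :: complex mat)" "b < dim_col (1\<^sub>m (2^n) :: complex mat)"
  then have a: "a < 2^n" and b: "b < 2^n" by auto
  have "tensor_mat n (\<lambda>k. qop_id) $$ (a, b) = (\<Prod>k<n. if bit a k = bit b k then 1 else 0)"
    using a b by (simp add: index_tensor_mat qop_id_def)
  also have "\<dots> = (if a = b then 1 else 0)"
    using nat_eq_iff_low_bits_eq[OF a b] by (simp add: prod_if_const_else_zero Ball_def)
  finally show "tensor_mat n (\<lambda>k. qop_id) $$ (a, b) = 1\<^sub>m (2^n) $$ (a, b)" using a b by simp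
qed auto

lemma trace_tensor_mat: "trace_mat (tensor_mat n G) = (\<Prod>k<n. G k False False + G k True True)"
  by (simp add: trace_mat_def index_tensor_mat sum_pow2_prod_bits[of "\<lambda>k c. G k c c"])

lemma pauli_string_eq_tensor_mat: "pauli_string n p = tensor_mat n (\<lambda>k. pauli_entry (p!k))"
  by (simp add: pauli_string_def tensor_mat_def)

lemma pauli_string_carrier [simp]: "pauli_string n p \<in> carrier_mat (2^n) (2^n)"
  by (simp add: pauli_string_def)

lemma dim_pauli_string [simp]: "dim_row (pauli_string n p) = 2^n" "dim_col (pauli_string n p) = 2^n"
  by (simp_all add: pauli_string_def)

lemma pauli_string_mult_adj: "pauli_string n p * adj (pauli_string n p) = 1\<^sub>m (2^n)"
proof -
  have "qop_mult (pauli_entry s) (qop_adj (pauli_entry s)) = qop_id" for s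
    by (cases s) (simp_all add: fun_eq_iff qop_mult_def qop_adj_def qop_id_def)
  then show ?thesis
    by (simp add: pauli_string_eq_tensor_mat adj_tensor_mat tensor_mat_mult tensor_mat_id del: pauli_string_carrier)
qed

lemma trace_adj_pauli_string_mult:
  assumes "length p = n" "length q = n"
  shows "trace_mat (adj (pauli_string n p) * pauli_string n q) = (if p = q then 2^n else 0)"
proof -
  have single: "qop_mult (qop_adj (pauli_entry s)) (pauli_entry t) False False
      + qop_mult (qop_adj (pauli_entry s)) (pauli_entry t) True True = (if s = t then 2 else 0)" for s t
    by (cases s; cases t) (simp_all add: qop_mult_def qop_adj_def)
  have "trace_mat (adj (pauli_string n p) * pauli_string n q) = (\<Prod>k<n. if p!k = q!k then 2 else 0)"
    by (simp add: pauli_string_eq_tensor_mat adj_tensor_mat tensor_mat_mult trace_tensor_mat single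
      del: pauli_string_carrier dim_pauli_string)
  also have "\<dots> = (if p = q then 2^n else 0)"
    using assms by (simp add: prod_if_const_else_zero list_eq_iff_nth_eq)
  finally show ?thesis .
qed

lemma pauli_string_eq_smult_imp_eq:
  assumes p: "length p = n" and q: "length q = n" and eq: "pauli_string n p = c \<cdot>\<^sub>m pauli_string n q"
  shows "p = q"
proof (rule ccontr)
  assume "p \<noteq> q"
  have "2^n = trace_mat (adj (pauli_string n p) * pauli_string n p)"
    using trace_adj_pauli_string_mult[OF p p] by simp
  also have "\<dots> = trace_mat (c \<cdot>\<^sub>m (adj (pauli_string n p) * pauli_string n q))"
    by (subst (2) eq) (simp add: mult_smult_distrib[of _ "2^n" "2^n" _ "2^n"])
  also have "\<dots> = 0"
    using trace_adj_pauli_string_mult[OF p q] \<open>p \<noteq> q\<close> by (simp add: trace_mat_def sum_distrib_left[symmetric])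
  finally show False by simp
qed

lemma inj_on_pauli_string: "inj_on (pauli_string n) {p. length p = n}"
  by (rule inj_onI) (simp add: pauli_string_eq_smult_imp_eq[where c = 1])

lemma sum_pauli_string_entries:
  assumes "a < 2^n" "b < 2^n" "c < 2^n" "e < 2^n"
  shows "(\<Sum>p\<in>{p. length p = n}. pauli_string n p $$ (a, c) * cnj (pauli_string n p $$ (b, e)))
    = (if a = b \<and> c = e then 2^n else 0)"
proof -
  have single: "(\<Sum>s\<in>UNIV. pauli_entry s x y * cnj (pauli_entry s u v)) = (if x = u \<and> y = v then 2 else 0)"
    for x y u v
    by (cases x; cases y; cases u; cases v) (simp_all add: UNIV_pauli)
  have "(\<Sum>p\<in>{p. length p = n}. pauli_string n p $$ (a, c) * cnj (pauli_string n p $$ (b, e)))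
      = (\<Sum>p\<in>{p. length p = n}. \<Prod>k<n.
           pauli_entry (p!k) (bit a k) (bit c k) * cnj (pauli_entry (p!k) (bit b k) (bit e k)))"
    using assms by (simp add: pauli_string_eq_tensor_mat index_tensor_mat prod.distrib)
  also have "\<dots> = (\<Prod>k<n. if bit a k = bit b k \<and> bit c k = bit e k then 2 else 0)"
    by (simp add: sum_lists_length_prod[of "\<lambda>k s. pauli_entry s (bit a k) (bit c k) * cnj (pauli_entry s (bit b k) (bit e k))"] single)
  also have "\<dots> = (if a = b \<and> c = e then 2^n else 0)"
    using nat_eq_iff_low_bits_eq[of a n b] nat_eq_iff_low_bits_eq[of c n e] assms
    by (auto simp: prod_if_const_else_zero)
  finally show ?thesis .
qed

lemma pauli_twirl:
  assumes M: "M \<in> carrier_mat (2^n) (2^n)" and a: "a < 2^n" and b: "b < 2^n"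
  shows "(\<Sum>p\<in>{p. length p = n}. (pauli_string n p * M * adj (pauli_string n p)) $$ (a, b))
    = (if a = b then 2^n * trace_mat M else 0)"
proof -
  let ?P = "pauli_string n" and ?L = "{p :: pauli list. length p = n}"
  have "(\<Sum>p\<in>?L. (?P p * M * adj (?P p)) $$ (a, b))
      = (\<Sum>p\<in>?L. \<Sum>c<2^n. \<Sum>e<2^n. M $$ (c, e) * (?P p $$ (a, c) * cnj (?P p $$ (b, e))))"
    using assms by (simp add: index_mult_mat_adj_sandwich[of _ "2^n"] mult_ac del: index_mult_mat(1))
  also have "\<dots> = (\<Sum>c<2^n. \<Sum>e<2^n. \<Sum>p\<in>?L. M $$ (c, e) * (?P p $$ (a, c) * cnj (?P p $$ (b, e))))"
    by (simp only: sum.swap[of _ ?L])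
  also have "\<dots> = (\<Sum>c<2^n. \<Sum>e<2^n. M $$ (c, e) * (if a = b \<and> c = e then 2^n else 0))"
    using a b by (simp add: sum_distrib_left[symmetric] sum_pauli_string_entries)
  also have "\<dots> = (if a = b then 2^n * trace_mat M else 0)"
    using M by (simp add: trace_mat_def sum_distrib_left mult.commute if_distrib[of "(*) _"] cong: if_cong)
  finally show ?thesis .
qed

lemma pauli_commutant_scalar:
  assumes M: "M \<in> carrier_mat (2^n) (2^n)"
    and comm: "\<And>p. length p = n \<Longrightarrow> M * pauli_string n p = pauli_string n p * M"
  shows "M = (trace_mat M / 2^n) \<cdot>\<^sub>m 1\<^sub>m (2^n)"
proof (rule eq_matI)
  fix a b assume "a < dim_row ((trace_mat M / 2^n) \<cdot>\<^sub>m 1\<^sub>m (2^n))" "b < dim_col ((trace_mat M / 2^n) \<cdot>\<^sub>m 1\<^sub>m (2^n))"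
  then have a: "a < 2^n" and b: "b < 2^n" by auto
  have "pauli_string n p * M * adj (pauli_string n p) = M" if "length p = n" for p
    using M by (simp add: comm[OF that, symmetric] pauli_string_mult_adj
      assoc_mult_mat[OF M pauli_string_carrier adj_carrier[OF pauli_string_carrier]])
  then have "of_nat (4^n) * M $$ (a, b) = (if a = b then 2^n * trace_mat M else 0)"
    using pauli_twirl[OF M a b] by (simp add: card_pauli_lists)
  moreover have "(4::complex)^n = 2^n * 2^n"
    by (simp add: power_mult_distrib[symmetric])
  ultimately show "M $$ (a, b) = ((trace_mat M / 2^n) \<cdot>\<^sub>m 1\<^sub>m (2^n)) $$ (a, b)"
    using a b by (auto simp: field_simps)
qed (use M in auto)

section \<open>The Clifford group\<close>

definition pauli_phases :: "complex set" where
  "pauli_phases = {1, -1, \<i>, -\<i>}"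

lemma pauli_phases_mult: "a \<in> pauli_phases \<Longrightarrow> b \<in> pauli_phases \<Longrightarrow> a * b \<in> pauli_phases"
  by (auto simp: pauli_phases_def)

lemma norm_pauli_phase: "a \<in> pauli_phases \<Longrightarrow> cmod a = 1"
  by (auto simp: pauli_phases_def)

lemma prod_pauli_phases: "finite A \<Longrightarrow> (\<And>k. k \<in> A \<Longrightarrow> \<omega> k \<in> pauli_phases) \<Longrightarrow> prod \<omega> A \<in> pauli_phases"
  by (induction A rule: finite_induct) (auto simp: pauli_phases_mult, simp add: pauli_phases_def)

lemma clifford_group_iff:
  "C \<in> clifford_group n \<longleftrightarrow> C \<in> carrier_mat (2^n) (2^n) \<and> C * adj C = 1\<^sub>m (2^n) \<and> adj C * C = 1\<^sub>m (2^n) \<and>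
     (\<forall>p. length p = n \<longrightarrow> (\<exists>\<omega>\<in>pauli_phases. \<exists>q. length q = n \<and>
        C * pauli_string n p * adj C = \<omega> \<cdot>\<^sub>m pauli_string n q))"
  by (auto simp: clifford_group_def unitary_mat_def pauli_group_def pauli_phases_def)

lemma clifford_groupD:
  assumes "C \<in> clifford_group n"
  shows "C \<in> carrier_mat (2^n) (2^n)" "C * adj C = 1\<^sub>m (2^n)" "adj C * C = 1\<^sub>m (2^n)"
    and "length p = n \<Longrightarrow> \<exists>\<omega>\<in>pauli_phases. \<exists>q. length q = n \<and> C * pauli_string n p * adj C = \<omega> \<cdot>\<^sub>m pauli_string n q"
  using assms by (auto simp: clifford_group_iff)

lemma one_mat_in_clifford_group: "1\<^sub>m (2^n) \<in> clifford_group n"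
  unfolding clifford_group_iff by (force simp: pauli_phases_def)

lemma clifford_group_mult:
  assumes D: "D \<in> clifford_group n" and C: "C \<in> clifford_group n"
  shows "D * C \<in> clifford_group n"
proof -
  let ?N = "2^n :: nat"
  have carr: "D \<in> carrier_mat ?N ?N" "C \<in> carrier_mat ?N ?N"
    using clifford_groupD(1) C D by auto
  have "\<exists>\<omega>\<in>pauli_phases. \<exists>q. length q = n \<and> D * C * pauli_string n p * adj (D * C) = \<omega> \<cdot>\<^sub>m pauli_string n q"
    if p: "length p = n" for p
  proof -
    obtain \<omega> q where \<omega>: "\<omega> \<in> pauli_phases" "length q = n" "C * pauli_string n p * adj C = \<omega> \<cdot>\<^sub>m pauli_string n q"
      using clifford_groupD(4)[OF C p] by blast
    obtain \<omega>' q' where \<omega>': "\<omega>' \<in> pauli_phases" "length q' = n" "D * pauli_string n q * adj D = \<omega>' \<cdot>\<^sub>m pauli_string n q'"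
      using clifford_groupD(4)[OF D \<omega>(2)] by blast
    have "D * C * pauli_string n p * adj (D * C) = D * (C * pauli_string n p * adj C) * adj D"
      using carr by (simp add: adj_mult_mat[of _ ?N ?N] assoc_mult_mat[of _ ?N ?N _ ?N _ ?N])
    also have "\<dots> = \<omega> \<cdot>\<^sub>m (D * pauli_string n q * adj D)"
      using carr by (simp add: \<omega>(3) mult_smult_distrib[of _ ?N ?N _ ?N] mult_smult_assoc_mat[of _ ?N ?N _ ?N])
    also have "\<dots> = (\<omega> * \<omega>') \<cdot>\<^sub>m pauli_string n q'"
      by (simp add: \<omega>'(3) smult_smult_mat)
    finally show ?thesis using \<omega> \<omega>' pauli_phases_mult by blast
  qed
  moreover have "unitary_mat ?N (D * C)"
    using C D by (intro unitary_mat_mult) (simp_all add: clifford_group_def)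
  ultimately show ?thesis by (simp add: clifford_group_iff unitary_mat_def)
qed

lemma smult_in_clifford_group:
  assumes C: "C \<in> clifford_group n" and z: "cmod z = 1"
  shows "z \<cdot>\<^sub>m C \<in> clifford_group n"
proof -
  let ?N = "2^n :: nat"
  have carr: "C \<in> carrier_mat ?N ?N" using clifford_groupD(1)[OF C] .
  have "cnj z * z = 1"
    using z by (rule cnj_mult_self_eq_one)
  then have "(z \<cdot>\<^sub>m C) * pauli_string n p * adj (z \<cdot>\<^sub>m C) = C * pauli_string n p * adj C" for p
    using carr by (simp add: adj_smult_mat mult_smult_distrib[of _ ?N ?N _ ?N] mult_smult_assoc_mat[of _ ?N ?N _ ?N]
      smult_smult_mat mult.commute)
  moreover have "unitary_mat ?N (z \<cdot>\<^sub>m C)"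
    using C z by (intro unitary_mat_smult) (simp_all add: clifford_group_def)
  ultimately show ?thesis
    using C by (simp add: clifford_group_iff unitary_mat_def)
qed

lemma clifford_conj_pauli_choice:
  assumes "C \<in> clifford_group n"
  obtains \<sigma> \<omega> where "\<And>p. length p = n \<Longrightarrow>
    length (\<sigma> p) = n \<and> \<omega> p \<in> pauli_phases \<and> C * pauli_string n p * adj C = \<omega> p \<cdot>\<^sub>m pauli_string n (\<sigma> p)"
proof -
  have "\<forall>p. \<exists>q \<omega>. length p = n \<longrightarrow>
      length q = n \<and> \<omega> \<in> pauli_phases \<and> C * pauli_string n p * adj C = \<omega> \<cdot>\<^sub>m pauli_string n q"
    using clifford_groupD(4)[OF assms] by blast
  then show ?thesis
    using that by metis
qed

lemma clifford_conj_permutes_pauli_strings: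
  assumes C: "C \<in> clifford_group n"
  obtains \<sigma> \<omega> where "bij_betw \<sigma> {p. length p = n} {p. length p = n}"
    and "\<And>p. length p = n \<Longrightarrow> \<omega> p \<in> pauli_phases"
    and "\<And>p. length p = n \<Longrightarrow> \<omega> p \<cdot>\<^sub>m (adj C * pauli_string n (\<sigma> p) * C) = pauli_string n p"
proof -
  let ?N = "2^n :: nat" and ?L = "{p :: pauli list. length p = n}" and ?P = "pauli_string n"
  have carr: "C \<in> carrier_mat ?N ?N" and unit: "adj C * C = 1\<^sub>m ?N"
    using clifford_groupD[OF C] by auto
  obtain \<sigma> \<omega> where \<sigma>_\<omega>: "\<And>p. length p = n \<Longrightarrow>
      length (\<sigma> p) = n \<and> \<omega> p \<in> pauli_phases \<and> C * ?P p * adj C = \<omega> p \<cdot>\<^sub>m ?P (\<sigma> p)"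
    using clifford_conj_pauli_choice[OF C] by blast
  have \<sigma>: "\<sigma> p \<in> ?L" "\<omega> p \<in> pauli_phases" "C * ?P p * adj C = \<omega> p \<cdot>\<^sub>m ?P (\<sigma> p)" if "p \<in> ?L" for p
    using \<sigma>_\<omega> that by simp_all
  have unconj: "\<omega> p \<cdot>\<^sub>m (adj C * ?P (\<sigma> p) * C) = ?P p" if "p \<in> ?L" for p
  proof -
    have "\<omega> p \<cdot>\<^sub>m (adj C * ?P (\<sigma> p) * C) = adj C * (\<omega> p \<cdot>\<^sub>m ?P (\<sigma> p)) * C"
      using carr by (simp add: mult_smult_distrib[of _ ?N ?N _ ?N] mult_smult_assoc_mat[of _ ?N ?N _ ?N])
    also have "\<dots> = ?P p"
      using \<sigma>(3)[OF that] mult_sandwich_cancel[OF carr unit, of "?P p"] by simp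
    finally show ?thesis .
  qed
  have "inj_on \<sigma> ?L"
  proof (rule inj_onI)
    fix p p' assume p: "p \<in> ?L" and p': "p' \<in> ?L" and eq: "\<sigma> p = \<sigma> p'"
    define X where "X = adj C * ?P (\<sigma> p) * C"
    have "\<omega> p' \<noteq> 0"
      using \<sigma>(2)[OF p'] norm_pauli_phase by fastforce
    then have "?P p = (\<omega> p / \<omega> p') \<cdot>\<^sub>m (\<omega> p' \<cdot>\<^sub>m X)"
      by (simp add: smult_smult_mat unconj[OF p, folded X_def])
    then have "?P p = (\<omega> p / \<omega> p') \<cdot>\<^sub>m ?P p'"
      by (simp add: unconj[OF p', folded eq, folded X_def])
    then show "p = p'" using p p' by (auto intro: pauli_string_eq_smult_imp_eq)
  qed
  moreover have "\<sigma> ` ?L \<subseteq> ?L"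
    using \<sigma>(1) by blast
  ultimately have "bij_betw \<sigma> ?L ?L"
    by (simp add: bij_betw_def endo_inj_surj finite_pauli_lists)
  then show ?thesis
    using \<sigma>(2) unconj by (intro that) auto
qed

lemma sum_pauli_expval_clifford_invariant:
  assumes C: "C \<in> clifford_group n" and \<psi>: "\<psi> \<in> carrier_vec (2^n)"
  shows "(\<Sum>p\<in>{p. length p = n}. f (cmod (expval (C *\<^sub>v \<psi>) (pauli_string n p))))
       = (\<Sum>p\<in>{p. length p = n}. f (cmod (expval \<psi> (pauli_string n p))))"
proof -
  let ?L = "{p :: pauli list. length p = n}" and ?P = "pauli_string n"
  obtain \<sigma> \<omega> where bij: "bij_betw \<sigma> ?L ?L" and \<omega>: "\<And>p. length p = n \<Longrightarrow> \<omega> p \<in> pauli_phases"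
    and unconj: "\<And>p. length p = n \<Longrightarrow> \<omega> p \<cdot>\<^sub>m (adj C * ?P (\<sigma> p) * C) = ?P p"
    using clifford_conj_permutes_pauli_strings[OF C] by blast
  have carr: "C \<in> carrier_mat (2^n) (2^n)"
    using clifford_groupD(1)[OF C] .
  have "cmod (expval \<psi> (?P p)) = cmod (expval (C *\<^sub>v \<psi>) (?P (\<sigma> p)))" if "length p = n" for p
  proof -
    have "expval \<psi> (?P p) = expval \<psi> (\<omega> p \<cdot>\<^sub>m (adj C * ?P (\<sigma> p) * C))"
      by (simp only: unconj[OF that])
    also have "\<dots> = \<omega> p * expval \<psi> (adj C * ?P (\<sigma> p) * C)"
      using carr \<psi> by (intro expval_smult_mat) simp
    also have "expval \<psi> (adj C * ?P (\<sigma> p) * C) = expval (C *\<^sub>v \<psi>) (?P (\<sigma> p))"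
      using carr \<psi> by (simp add: expval_mult_mat_vec)
    finally show ?thesis
      using \<omega>[OF that] by (simp add: norm_mult norm_pauli_phase)
  qed
  then have "(\<Sum>p\<in>?L. f (cmod (expval \<psi> (?P p)))) = (\<Sum>p\<in>?L. f (cmod (expval (C *\<^sub>v \<psi>) (?P (\<sigma> p)))))"
    by simp
  also have "\<dots> = (\<Sum>p\<in>?L. f (cmod (expval (C *\<^sub>v \<psi>) (?P p))))"
    by (rule sum.reindex_bij_betw[OF bij])
  finally show ?thesis by simp
qed

section \<open>Local Clifford gates\<close>

definition sqrt_half :: complex where
  "sqrt_half = complex_of_real (sqrt (1/2))"

lemma sqrt_half_mult_self: "sqrt_half * sqrt_half = 1/2" "sqrt_half * (sqrt_half * z) = z/2"
  by (simp_all flip: of_real_mult add: sqrt_half_def mult.assoc[symmetric])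

lemma cnj_sqrt_half [simp]: "cnj sqrt_half = sqrt_half"
  by (simp add: sqrt_half_def)

definition qop_clifford :: "qubit_op \<Rightarrow> bool" where
  "qop_clifford G \<longleftrightarrow> qop_mult G (qop_adj G) = qop_id \<and> qop_mult (qop_adj G) G = qop_id \<and>
     (\<forall>t. \<exists>\<omega>\<in>pauli_phases. \<exists>t'. qop_mult (qop_mult G (pauli_entry t)) (qop_adj G) = (\<lambda>a b. \<omega> * pauli_entry t' a b))"

definition hadamard :: qubit_op where
  "hadamard = (\<lambda>a b. if a \<and> b then - sqrt_half else sqrt_half)"

definition y_basis_gate :: qubit_op where
  "y_basis_gate = (\<lambda>a b. if b then (if a then \<i> else - \<i>) * sqrt_half else sqrt_half)"

lemma qop_clifford_hadamard: "qop_clifford hadamard"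
  unfolding qop_clifford_def
  by (simp add: hadamard_def fun_eq_iff all_bool_eq qop_mult_def qop_adj_def qop_id_def sqrt_half_mult_self
    pauli_phases_def ex_pauli all_pauli)

lemma qop_clifford_y_basis_gate: "qop_clifford y_basis_gate"
  unfolding qop_clifford_def
  by (simp add: y_basis_gate_def fun_eq_iff all_bool_eq qop_mult_def qop_adj_def qop_id_def sqrt_half_mult_self
    pauli_phases_def ex_pauli all_pauli algebra_simps)

definition diag_pauli :: "pauli \<Rightarrow> pauli" where
  "diag_pauli s = (if s = PI then PI else PZ)"

definition diagonalizing_gate :: "pauli \<Rightarrow> qubit_op" where
  "diagonalizing_gate s = (case s of PX \<Rightarrow> hadamard | PY \<Rightarrow> y_basis_gate | _ \<Rightarrow> qop_id)"

lemma qop_clifford_diagonalizing_gate: "qop_clifford (diagonalizing_gate s)"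
proof -
  have "qop_clifford qop_id"
    by (simp add: qop_clifford_def fun_eq_iff all_bool_eq qop_mult_def qop_adj_def qop_id_def pauli_phases_def
      ex_pauli all_pauli)
  then show ?thesis
    by (cases s) (simp_all add: diagonalizing_gate_def qop_clifford_hadamard qop_clifford_y_basis_gate)
qed

lemma diagonalizing_gate_conj:
  "qop_mult (qop_mult (qop_adj (diagonalizing_gate s)) (pauli_entry (diag_pauli s))) (diagonalizing_gate s) = pauli_entry s"
  by (cases s) (simp_all add: diagonalizing_gate_def diag_pauli_def hadamard_def y_basis_gate_def fun_eq_iff all_bool_eq
    qop_mult_def qop_adj_def qop_id_def sqrt_half_mult_self algebra_simps)

lemma tensor_mat_in_clifford_group:
  assumes G: "\<And>k. k < n \<Longrightarrow> qop_clifford (G k)"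
  shows "tensor_mat n G \<in> clifford_group n"
proof -
  have "tensor_mat n G * adj (tensor_mat n G) = 1\<^sub>m (2^n)" "adj (tensor_mat n G) * tensor_mat n G = 1\<^sub>m (2^n)"
    using G by (simp_all add: adj_tensor_mat tensor_mat_mult qop_clifford_def tensor_mat_id[symmetric] cong: tensor_mat_cong)
  moreover have "\<exists>\<omega>\<in>pauli_phases. \<exists>q. length q = n \<and>
      tensor_mat n G * pauli_string n p * adj (tensor_mat n G) = \<omega> \<cdot>\<^sub>m pauli_string n q" for p
  proof -
    have "\<forall>k\<in>{..<n}. \<exists>\<omega>t. fst \<omega>t \<in> pauli_phases \<and>
        qop_mult (qop_mult (G k) (pauli_entry (p!k))) (qop_adj (G k)) = (\<lambda>a b. fst \<omega>t * pauli_entry (snd \<omega>t) a b)"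
      using G by (force simp: qop_clifford_def)
    then obtain \<omega>t where \<omega>t: "\<And>k. k < n \<Longrightarrow> fst (\<omega>t k) \<in> pauli_phases \<and>
        qop_mult (qop_mult (G k) (pauli_entry (p!k))) (qop_adj (G k)) = (\<lambda>a b. fst (\<omega>t k) * pauli_entry (snd (\<omega>t k)) a b)"
      by (metis lessThan_iff)
    define q where "q = map (\<lambda>k. snd (\<omega>t k)) [0..<n]"
    have "tensor_mat n G * pauli_string n p * adj (tensor_mat n G)
        = tensor_mat n (\<lambda>k a b. fst (\<omega>t k) * pauli_entry (snd (\<omega>t k)) a b)"
      by (simp add: pauli_string_eq_tensor_mat adj_tensor_mat tensor_mat_mult \<omega>t cong: tensor_mat_cong)
    also have "\<dots> = (\<Prod>k<n. fst (\<omega>t k)) \<cdot>\<^sub>m pauli_string n q"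
      by (simp add: tensor_mat_scaled pauli_string_eq_tensor_mat q_def cong: tensor_mat_cong)
    finally show ?thesis
      using \<omega>t by (intro bexI[of _ "\<Prod>k<n. fst (\<omega>t k)"] exI[of _ q]) (auto simp: q_def intro: prod_pauli_phases)
  qed
  ultimately show ?thesis by (simp add: clifford_group_iff)
qed

definition diagonalizing_clifford :: "nat \<Rightarrow> pauli list \<Rightarrow> complex mat" where
  "diagonalizing_clifford n p = tensor_mat n (\<lambda>k. diagonalizing_gate (p!k))"

lemma diagonalizing_clifford_in_clifford_group: "diagonalizing_clifford n p \<in> clifford_group n"
  unfolding diagonalizing_clifford_def by (rule tensor_mat_in_clifford_group) (rule qop_clifford_diagonalizing_gate)

lemma diagonalizing_clifford_conj:
  "length p = n \<Longrightarrow>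
    adj (diagonalizing_clifford n p) * pauli_string n (map diag_pauli p) * diagonalizing_clifford n p = pauli_string n p"
  unfolding diagonalizing_clifford_def pauli_string_eq_tensor_mat adj_tensor_mat tensor_mat_mult
  by (rule tensor_mat_cong) (simp add: diagonalizing_gate_conj)

section \<open>Averages over the Clifford group modulo phases\<close>

definition phase_class :: "complex mat \<Rightarrow> complex mat set" where
  "phase_class C = {z \<cdot>\<^sub>m C | z. cmod z = 1}"

lemma clifford_mod_phase_eq: "clifford_mod_phase n = phase_class ` clifford_group n"
  by (simp add: clifford_mod_phase_def phase_class_def)

lemma self_in_phase_class: "C \<in> phase_class C"
  unfolding phase_class_def by (rule CollectI, rule exI[of _ 1]) simp

lemma phase_class_smult:
  assumes "cmod w = 1"
  shows "phase_class (w \<cdot>\<^sub>m C) = phase_class C"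
proof -
  have "z \<cdot>\<^sub>m C = (z / w) \<cdot>\<^sub>m (w \<cdot>\<^sub>m C)" "cmod (z / w) = cmod z" for z
    using assms by (auto simp: smult_smult_mat norm_divide)
  moreover have "z \<cdot>\<^sub>m (w \<cdot>\<^sub>m C) = (z * w) \<cdot>\<^sub>m C" "cmod (z * w) = cmod z" for z
    using assms by (auto simp: smult_smult_mat norm_mult)
  ultimately show ?thesis
    unfolding phase_class_def by (metis (no_types, opaque_lifting))
qed

lemma phase_class_eqD: "phase_class A = phase_class B \<Longrightarrow> \<exists>w. cmod w = 1 \<and> A = w \<cdot>\<^sub>m B"
  using self_in_phase_class[of A] by (auto simp: phase_class_def)

lemma phase_class_mult_left_cancel:
  assumes D: "unitary_mat N D" and A: "A \<in> carrier_mat N N" and B: "B \<in> carrier_mat N N"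
    and eq: "phase_class (D * A) = phase_class (D * B)"
  shows "phase_class A = phase_class B"
proof -
  obtain w where w: "cmod w = 1" "D * A = w \<cdot>\<^sub>m (D * B)"
    using phase_class_eqD[OF eq] by blast
  have carrD: "D \<in> carrier_mat N N" and unitD: "adj D * D = 1\<^sub>m N"
    using D by (auto simp: unitary_mat_def)
  have "A = adj D * (D * A)"
    using A carrD unitD by (simp add: assoc_mult_mat[of _ N N _ N _ N, symmetric])
  also have "\<dots> = w \<cdot>\<^sub>m (adj D * (D * B))"
    using B carrD by (simp add: w(2) mult_smult_distrib[of _ N N _ N])
  also have "adj D * (D * B) = B"
    using B carrD unitD by (simp add: assoc_mult_mat[of _ N N _ N _ N, symmetric])
  finally show ?thesis
    using phase_class_smult[OF w(1)] by simp
qed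

lemma some_in_clifford_mod_phase:
  assumes "K \<in> clifford_mod_phase n"
  shows "(SOME C. C \<in> K) \<in> clifford_group n" "K = phase_class (SOME C. C \<in> K)"
proof -
  obtain C where C: "C \<in> clifford_group n" "K = phase_class C"
    using assms by (auto simp: clifford_mod_phase_eq)
  then have "(SOME C. C \<in> K) \<in> phase_class C"
    using self_in_phase_class by (metis someI)
  then obtain z where "cmod z = 1" "(SOME C. C \<in> K) = z \<cdot>\<^sub>m C"
    by (auto simp: phase_class_def)
  then show "(SOME C. C \<in> K) \<in> clifford_group n" "K = phase_class (SOME C. C \<in> K)"
    using C by (simp_all add: smult_in_clifford_group phase_class_smult)
qed

lemma clifford_avg_cong:
  "(\<And>C. C \<in> clifford_group n \<Longrightarrow> f C = g C) \<Longrightarrow> clifford_avg n f = clifford_avg n g"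
  unfolding clifford_avg_def using some_in_clifford_mod_phase(1) by (simp cong: sum.cong)

lemma clifford_avg_sum: "(\<Sum>s\<in>A. clifford_avg n (f s)) = clifford_avg n (\<lambda>C. \<Sum>s\<in>A. f s C)"
  unfolding clifford_avg_def by (simp add: sum_divide_distrib[symmetric] sum.swap[of _ A])

lemma clifford_avg_mult_left: "clifford_avg n (\<lambda>C. c * f C) = c * clifford_avg n f"
  by (simp add: clifford_avg_def sum_distrib_left)

lemma clifford_avg_divide: "clifford_avg n (\<lambda>C. f C / c) = clifford_avg n f / c"
  by (simp add: clifford_avg_def sum_divide_distrib[symmetric])

lemma clifford_avg_const:
  assumes "finite (clifford_mod_phase n)" and "\<And>C. C \<in> clifford_group n \<Longrightarrow> f C = c"
  shows "clifford_avg n f = c"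
proof -
  have "clifford_mod_phase n \<noteq> {}"
    using one_mat_in_clifford_group by (auto simp: clifford_mod_phase_eq)
  then show ?thesis
    using assms some_in_clifford_mod_phase(1) by (simp add: clifford_avg_def)
qed

lemma clifford_avg_left_translate:
  assumes fin: "finite (clifford_mod_phase n)" and D: "D \<in> clifford_group n"
    and g: "\<And>C w. C \<in> clifford_group n \<Longrightarrow> cmod w = 1 \<Longrightarrow> g (w \<cdot>\<^sub>m C) = g C"
  shows "clifford_avg n (\<lambda>C. g (D * C)) = clifford_avg n g"
proof -
  let ?K = "clifford_mod_phase n" and ?rep = "\<lambda>K. SOME C. C \<in> K"
  define \<Phi> where "\<Phi> K = phase_class (D * ?rep K)" for K
  have rep: "?rep K \<in> clifford_group n" "K = phase_class (?rep K)" if "K \<in> ?K" for K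
    using some_in_clifford_mod_phase[OF that] by simp_all
  have "\<Phi> ` ?K \<subseteq> ?K"
    using rep(1) clifford_group_mult[OF D] by (auto simp: \<Phi>_def clifford_mod_phase_eq)
  moreover have "inj_on \<Phi> ?K"
  proof (rule inj_onI)
    fix K1 K2 assume K1: "K1 \<in> ?K" and K2: "K2 \<in> ?K" and "\<Phi> K1 = \<Phi> K2"
    have "unitary_mat (2^n) D"
      using D by (simp add: clifford_group_def)
    then have "phase_class (?rep K1) = phase_class (?rep K2)"
      using clifford_groupD(1)[OF rep(1)[OF K1]] clifford_groupD(1)[OF rep(1)[OF K2]] \<open>\<Phi> K1 = \<Phi> K2\<close>
      unfolding \<Phi>_def by (rule phase_class_mult_left_cancel)
    then show "K1 = K2"
      using rep(2)[OF K1] rep(2)[OF K2] by simp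
  qed
  ultimately have bij: "bij_betw \<Phi> ?K ?K"
    by (simp add: bij_betw_def endo_inj_surj fin)
  have "g (?rep (\<Phi> K)) = g (D * ?rep K)" if "K \<in> ?K" for K
  proof -
    have "?rep (\<Phi> K) \<in> phase_class (D * ?rep K)"
      unfolding \<Phi>_def by (rule someI, rule self_in_phase_class)
    then obtain z where "cmod z = 1" "?rep (\<Phi> K) = z \<cdot>\<^sub>m (D * ?rep K)"
      by (auto simp: phase_class_def)
    then show ?thesis
      using g clifford_group_mult[OF D rep(1)[OF that]] by simp
  qed
  then have "(\<Sum>K\<in>?K. g (D * ?rep K)) = (\<Sum>K\<in>?K. g (?rep (\<Phi> K)))"
    by simp
  also have "\<dots> = (\<Sum>K\<in>?K. g (?rep K))"
    by (rule sum.reindex_bij_betw[OF bij])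
  finally show ?thesis by (simp add: clifford_avg_def)
qed

lemma phase_class_eq_if_same_pauli_action:
  assumes C1: "C1 \<in> clifford_group n" and C2: "C2 \<in> clifford_group n"
    and eq: "\<And>p. length p = n \<Longrightarrow> C1 * pauli_string n p * adj C1 = C2 * pauli_string n p * adj C2"
  shows "phase_class C1 = phase_class C2"
proof -
  let ?N = "2^n :: nat"
  have c1: "C1 \<in> carrier_mat ?N ?N" "C1 * adj C1 = 1\<^sub>m ?N" "adj C1 * C1 = 1\<^sub>m ?N"
    and c2: "C2 \<in> carrier_mat ?N ?N" "C2 * adj C2 = 1\<^sub>m ?N" "adj C2 * C2 = 1\<^sub>m ?N"
    using clifford_groupD[OF C1] clifford_groupD[OF C2] by auto
  define M where "M = adj C2 * C1"
  have M: "M \<in> carrier_mat ?N ?N" using c1 c2 by (simp add: M_def)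
  have "M * pauli_string n p = pauli_string n p * M" if "length p = n" for p
  proof -
    have "M * pauli_string n p = adj C2 * (C1 * pauli_string n p * adj C1) * C1"
      using c1 c2(1) by (simp add: M_def assoc_mult_mat[of _ ?N ?N _ ?N _ ?N])
    also have "\<dots> = adj C2 * (C2 * pauli_string n p * adj C2) * C1"
      by (simp add: eq[OF that])
    also have "\<dots> = (adj C2 * C2) * pauli_string n p * M"
      using c1(1) c2(1) by (simp add: M_def assoc_mult_mat[of _ ?N ?N _ ?N _ ?N])
    also have "\<dots> = pauli_string n p * M"
      using c2(3) M by simp
    finally show ?thesis .
  qed
  then obtain c where M_c: "M = c \<cdot>\<^sub>m 1\<^sub>m ?N"
    using pauli_commutant_scalar[OF M] by blast
  have "C1 = C2 * M"
    using c1 c2 by (simp add: M_def assoc_mult_mat[of _ ?N ?N _ ?N _ ?N, symmetric])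
  then have C1_eq: "C1 = c \<cdot>\<^sub>m C2"
    using c2 by (simp add: M_c mult_smult_distrib[of _ ?N ?N _ ?N])
  have "unitary_mat ?N (c \<cdot>\<^sub>m C2)" "unitary_mat ?N C2"
    using C1 C2 by (simp_all add: C1_eq[symmetric] clifford_group_def)
  then have "cmod c = 1"
    by (rule norm_eq_one_if_unitary_smult[where A = C2]) simp_all
  then show ?thesis
    using C1_eq phase_class_smult by simp
qed

lemma finite_clifford_mod_phase: "finite (clifford_mod_phase n)"
proof -
  let ?L = "{p :: pauli list. length p = n}"
  let ?S = "(\<lambda>(\<omega>, q). \<omega> \<cdot>\<^sub>m pauli_string n q) ` (pauli_phases \<times> ?L)"
  define action where "action C = restrict (\<lambda>p. C * pauli_string n p * adj C) ?L" for C
  define h where "h F = phase_class (SOME C. C \<in> clifford_group n \<and> action C = F)" for F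
  have "action C \<in> PiE ?L (\<lambda>_. ?S)" if C: "C \<in> clifford_group n" for C
  proof -
    have "C * pauli_string n p * adj C \<in> ?S" if "p \<in> ?L" for p
      using clifford_groupD(4)[OF C, of p] that by auto
    then show ?thesis by (simp add: action_def)
  qed
  then have "action ` clifford_group n \<subseteq> PiE ?L (\<lambda>_. ?S)"
    by blast
  then have "finite (action ` clifford_group n)"
    by (rule finite_subset) (simp add: finite_PiE finite_pauli_lists pauli_phases_def)
  moreover have "phase_class C = h (action C)" if C: "C \<in> clifford_group n" for C
  proof -
    obtain C' where C': "C' \<in> clifford_group n" "action C' = action C" "h (action C) = phase_class C'"
      using someI[of "\<lambda>C'. C' \<in> clifford_group n \<and> action C' = action C" C] C by (auto simp: h_def)
    have "C' * pauli_string n p * adj C' = C * pauli_string n p * adj C" if "length p = n" for p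
      using fun_cong[OF C'(2), of p] that by (simp add: action_def)
    then show ?thesis
      using phase_class_eq_if_same_pauli_action[OF C' (1) C] C'(3) by simp
  qed
  then have "clifford_mod_phase n = h ` action ` clifford_group n"
    by (auto simp: clifford_mod_phase_eq image_image)
  ultimately show ?thesis by simp
qed

section \<open>Walsh characters\<close>

definition walsh :: "pauli list \<Rightarrow> nat \<Rightarrow> real" where
  "walsh p s = (\<Prod>k<length p. if p!k \<noteq> PI \<and> bit s k then -1 else 1)"

lemma walsh_xor: "walsh p (xor a b) = walsh p a * walsh p b"
  unfolding walsh_def prod.distrib[symmetric] by (rule prod.cong) (auto simp: bit_xor_iff)

lemma sum_walsh: "(\<Sum>p\<in>{p. length p = n}. walsh p x) = (\<Prod>k<n. if bit x k then -2 else 4)"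
proof -
  have "(\<Sum>p\<in>{p. length p = n}. walsh p x)
      = (\<Sum>p\<in>{p. length p = n}. \<Prod>k<n. if p!k \<noteq> PI \<and> bit x k then -1 else (1::real))"
    by (simp add: walsh_def)
  also have "\<dots> = (\<Prod>k<n. \<Sum>s\<in>UNIV. if s \<noteq> PI \<and> bit x k then -1 else (1::real))"
    by (rule sum_lists_length_prod)
  also have "\<dots> = (\<Prod>k<n. if bit x k then -2 else 4)"
    by (intro prod.cong) (simp_all add: UNIV_pauli)
  finally show ?thesis .
qed

lemma hamming_weight_eq_sum_walsh:
  "(-2::real) powi (- int (hamming n x)) = (\<Sum>p\<in>{p. length p = n}. walsh p x) / 4^n"
proof -
  define H where "H = {k. k < n \<and> bit x k}"
  have H: "H \<subseteq> {..<n}" "card H = hamming n x"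
    by (auto simp: H_def hamming_def)
  then have card_compl: "card ({..<n} - H) = n - hamming n x"
    by (simp add: card_Diff_subset finite_subset)
  have "(\<Prod>k<n. if bit x k then -2 else (4::real)) = (-2)^hamming n x * 4^(n - hamming n x)"
  proof -
    have "{..<n} \<inter> {k. bit x k} = H" "{..<n} \<inter> - {k. bit x k} = {..<n} - H"
      by (auto simp: H_def)
    then show ?thesis
      using H card_compl by (simp add: prod.If_cases)
  qed
  moreover have "(4::real)^n = (-2)^hamming n x * (-2)^hamming n x * 4^(n - hamming n x)"
    using card_mono[OF _ H(1)] H(2)
    by (simp add: power_mult_distrib[symmetric] power_add[symmetric])
  ultimately show ?thesis
    by (simp add: sum_walsh power_int_minus field_simps)
qed

lemma sum_hamming_weighted_products:
  fixes \<pi> :: "nat \<Rightarrow> real"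
  shows "(\<Sum>s1<2^n. \<Sum>s2<2^n. \<Sum>s3<2^n. \<Sum>s4<2^n.
      (-2) powi (- int (hamming n (xor (xor (xor s1 s2) s3) s4))) * (\<pi> s1 * \<pi> s2 * \<pi> s3 * \<pi> s4))
    = (\<Sum>p\<in>{p. length p = n}. (\<Sum>s<2^n. walsh p s * \<pi> s)^4) / 4^n"
proof -
  let ?L = "{p :: pauli list. length p = n}"
  have "(\<Sum>p\<in>?L. (\<Sum>s<2^n. walsh p s * \<pi> s)^4)
      = (\<Sum>p\<in>?L. \<Sum>s1<2^n. \<Sum>s2<2^n. \<Sum>s3<2^n. \<Sum>s4<2^n.
           walsh p (xor (xor (xor s1 s2) s3) s4) * (\<pi> s1 * \<pi> s2 * \<pi> s3 * \<pi> s4))"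
    by (simp add: sum_power4 walsh_xor mult_ac)
  also have "\<dots> = (\<Sum>s1<2^n. \<Sum>s2<2^n. \<Sum>s3<2^n. \<Sum>s4<2^n. \<Sum>p\<in>?L.
           walsh p (xor (xor (xor s1 s2) s3) s4) * (\<pi> s1 * \<pi> s2 * \<pi> s3 * \<pi> s4))"
    by (simp only: sum.swap[of _ ?L])
  finally show ?thesis
    by (simp add: hamming_weight_eq_sum_walsh sum_divide_distrib sum_distrib_right)
qed

lemma expval_diag_pauli_string:
  assumes p: "length p = n" and v: "v \<in> carrier_vec (2^n)"
  shows "expval v (pauli_string n (map diag_pauli p)) = complex_of_real (\<Sum>s<2^n. walsh p s * (cmod (v $ s))^2)"
proof -
  let ?Z = "pauli_string n (map diag_pauli p)"
  have Z: "?Z $$ (a, b) = (\<Prod>k<n. pauli_entry (diag_pauli (p!k)) (bit a k) (bit b k))"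
    if "a < 2^n" "b < 2^n" for a b :: nat
    using that p by (simp add: pauli_string_eq_tensor_mat index_tensor_mat)
  have off_diag: "?Z $$ (a, b) = 0" if ab: "a < 2^n" "b < 2^n" "a \<noteq> b" for a b :: nat
  proof -
    obtain k where "k < n" "bit a k \<noteq> bit b k"
      using nat_eq_iff_low_bits_eq[of a n b] ab by auto
    then show ?thesis
      using ab by (simp add: Z) (intro prod_zero bexI[of _ k], auto simp: diag_pauli_def)
  qed
  have diag: "?Z $$ (a, a) = complex_of_real (walsh p a)" if "a < 2^n" for a :: nat
  proof -
    have "?Z $$ (a, a) = (\<Prod>k<n. complex_of_real (if p!k \<noteq> PI \<and> bit a k then -1 else 1))"
      using that by (simp add: Z) (intro prod.cong, auto simp: diag_pauli_def)
    then show ?thesis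
      using p by (simp add: walsh_def)
  qed
  show ?thesis
    using v off_diag by (simp add: expval_diagonal[of _ "2^n"] diag)
qed

lemma outcome_prob_eq:
  "C \<in> carrier_mat (2^n) (2^n) \<Longrightarrow> \<psi> \<in> carrier_vec (2^n) \<Longrightarrow> s < 2^n \<Longrightarrow>
    outcome_prob n \<psi> C s = (cmod ((C *\<^sub>v \<psi>) $ s))^2"
  by (simp add: outcome_prob_def index_mult_mat_vec_sum del: index_mult_mat_vec)

lemma hamming_weighted_outcome_sum:
  assumes C: "C \<in> carrier_mat (2^n) (2^n)" and \<psi>: "\<psi> \<in> carrier_vec (2^n)"
  shows "(\<Sum>s1<2^n. \<Sum>s2<2^n. \<Sum>s3<2^n. \<Sum>s4<2^n.
      (-2) powi (- int (hamming n (xor (xor (xor s1 s2) s3) s4))) *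
      (outcome_prob n \<psi> C s1 * outcome_prob n \<psi> C s2 * outcome_prob n \<psi> C s3 * outcome_prob n \<psi> C s4))
    = (\<Sum>p\<in>{p. length p = n}. cmod (expval (C *\<^sub>v \<psi>) (pauli_string n (map diag_pauli p))) ^ 4) / 4^n"
proof -
  have "cmod (expval (C *\<^sub>v \<psi>) (pauli_string n (map diag_pauli p)))
      = \<bar>\<Sum>s<2^n. walsh p s * outcome_prob n \<psi> C s\<bar>" if "length p = n" for p
  proof -
    have "expval (C *\<^sub>v \<psi>) (pauli_string n (map diag_pauli p))
        = complex_of_real (\<Sum>s<2^n. walsh p s * (cmod ((C *\<^sub>v \<psi>) $ s))^2)"
      using that C \<psi> by (intro expval_diag_pauli_string) auto
    also have "(\<Sum>s<2^n. walsh p s * (cmod ((C *\<^sub>v \<psi>) $ s))^2) = (\<Sum>s<2^n. walsh p s * outcome_prob n \<psi> C s)"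
      using C \<psi> by (intro sum.cong) (simp_all add: outcome_prob_eq)
    finally show ?thesis by (simp only: norm_of_real)
  qed
  then have "cmod (expval (C *\<^sub>v \<psi>) (pauli_string n (map diag_pauli p))) ^ 4
      = (\<Sum>s<2^n. walsh p s * outcome_prob n \<psi> C s)^4" if "length p = n" for p
    using that by (simp add: power_even_abs)
  then show ?thesis
    by (simp add: sum_hamming_weighted_products)
qed

lemma clifford_avg_diag_pauli_eq:
  assumes fin: "finite (clifford_mod_phase n)" and \<psi>: "\<psi> \<in> carrier_vec (2^n)" and p: "length p = n"
  shows "clifford_avg n (\<lambda>C. cmod (expval (C *\<^sub>v \<psi>) (pauli_string n (map diag_pauli p))) ^ 4)
       = clifford_avg n (\<lambda>C. cmod (expval (C *\<^sub>v \<psi>) (pauli_string n p)) ^ 4)"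
proof -
  let ?D = "diagonalizing_clifford n p" and ?Z = "pauli_string n (map diag_pauli p)"
  have "clifford_avg n (\<lambda>C. cmod (expval (C *\<^sub>v \<psi>) ?Z) ^ 4)
      = clifford_avg n (\<lambda>C. cmod (expval ((?D * C) *\<^sub>v \<psi>) ?Z) ^ 4)"
    by (intro clifford_avg_left_translate[OF fin diagonalizing_clifford_in_clifford_group, symmetric])
      (simp add: expval_phase_mult_mat_vec[OF clifford_groupD(1) \<psi>])
  also have "\<dots> = clifford_avg n (\<lambda>C. cmod (expval (C *\<^sub>v \<psi>) (pauli_string n p)) ^ 4)"
  proof (rule clifford_avg_cong)
    fix C assume "C \<in> clifford_group n"
    then have C: "C \<in> carrier_mat (2^n) (2^n)" by (rule clifford_groupD(1))
    have D: "?D \<in> carrier_mat (2^n) (2^n)"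
      by (simp add: diagonalizing_clifford_def)
    have "expval ((?D * C) *\<^sub>v \<psi>) ?Z = expval (C *\<^sub>v \<psi>) (adj ?D * ?Z * ?D)"
      using C D \<psi> by (simp add: expval_mult_mat_vec)
    then show "cmod (expval ((?D * C) *\<^sub>v \<psi>) ?Z) ^ 4 = cmod (expval (C *\<^sub>v \<psi>) (pauli_string n p)) ^ 4"
      by (simp add: diagonalizing_clifford_conj[OF p])
  qed
  finally show ?thesis .
qed

lemma sum_Xi_squared:
  "(\<Sum>P\<in>pauli_group n. (Xi n \<psi> P)^2) = (\<Sum>p\<in>{p. length p = n}. cmod (expval \<psi> (pauli_string n p)) ^ 4) / 4^n"
proof -
  have "((2::real)^n)^2 = 4^n"
    by (simp add: power2_eq_square power_mult_distrib[symmetric])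
  then have "(Xi n \<psi> P)^2 = cmod (expval \<psi> P) ^ 4 / 4^n" for P
    by (simp add: Xi_def power_divide power_mult[symmetric])
  then show ?thesis
    by (simp add: pauli_group_def sum.reindex[OF inj_on_pauli_string] sum_divide_distrib)
qed

theorem mainTheorem3:
  fixes n :: nat and \<psi> :: "complex vec"
  assumes "n \<ge> 1" and "is_state n \<psi>"
  shows "M2 n \<psi> =
    - log 2 (\<Sum>s1<2^n. \<Sum>s2<2^n. \<Sum>s3<2^n. \<Sum>s4<2^n.
         (-2) powi (- int (hamming n (xor (xor (xor s1 s2) s3) s4))) * Qfun n \<psi> s1 s2 s3 s4)
    - log 2 (2^n)"
proof -
  let ?L = "{p :: pauli list. length p = n}"
  let ?Z = "\<lambda>p. pauli_string n (map diag_pauli p)" and ?P = "pauli_string n"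
  have \<psi>: "\<psi> \<in> carrier_vec (2^n)" using assms(2) by (simp add: is_state_def)
  have fin: "finite (clifford_mod_phase n)" by (rule finite_clifford_mod_phase)
  have "(\<Sum>s1<2^n. \<Sum>s2<2^n. \<Sum>s3<2^n. \<Sum>s4<2^n.
         (-2) powi (- int (hamming n (xor (xor (xor s1 s2) s3) s4))) * Qfun n \<psi> s1 s2 s3 s4)
      = clifford_avg n (\<lambda>C. (\<Sum>p\<in>?L. cmod (expval (C *\<^sub>v \<psi>) (?Z p)) ^ 4) / 4^n)"
    using \<psi> clifford_groupD(1)
    by (simp add: Qfun_def clifford_avg_mult_left[symmetric] clifford_avg_sum hamming_weighted_outcome_sum
      cong: clifford_avg_cong)
  also have "\<dots> = (\<Sum>p\<in>?L. clifford_avg n (\<lambda>C. cmod (expval (C *\<^sub>v \<psi>) (?P p)) ^ 4)) / 4^n"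
    using fin \<psi> by (simp add: clifford_avg_divide clifford_avg_sum[symmetric] clifford_avg_diag_pauli_eq)
  also have "\<dots> = clifford_avg n (\<lambda>C. \<Sum>p\<in>?L. cmod (expval (C *\<^sub>v \<psi>) (?P p)) ^ 4) / 4^n"
    by (simp add: clifford_avg_sum)
  also have "clifford_avg n (\<lambda>C. \<Sum>p\<in>?L. cmod (expval (C *\<^sub>v \<psi>) (?P p)) ^ 4)
      = (\<Sum>p\<in>?L. cmod (expval \<psi> (?P p)) ^ 4)"
    using \<psi> by (intro clifford_avg_const[OF fin] sum_pauli_expval_clifford_invariant)
  also have "(\<Sum>p\<in>?L. cmod (expval \<psi> (?P p)) ^ 4) / 4^n = (\<Sum>P\<in>pauli_group n. (Xi n \<psi> P)^2)"
    by (rule sum_Xi_squared[symmetric])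
  finally show ?thesis by (simp add: M2_def)
qed

end
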